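(* Let $G$ and $H$ be finite simple graphs, neither of which is complete. Then for all vertices $(g,h),(g',h')$ of $G\diamond H$, either $d_{G\diamond H}((g,h),(g',h'))\le 3$ or $d_{G\diamond H}((g,h),(g',h'))=\infty$; moreover the latter can happen only when both $G$ and $H$ are disjoint unions of two complete graphs.
   Context: The modular product $G\diamond H$ has vertex set $V(G)\times V(H)$; distinct vertices $(g,h)$ and $(g',h')$ are adjacent iff ($g=g'$ and $hh'\in E(H)$), or ($gg'\in E(G)$ and $h=h'$), or ($gg'\in E(G)$ and $hh'\in E(H)$), or ($g\neq g'$, $h\neq h'$, $gg'\notin E(G)$ and $hh'\notin E(H)$). $d_X(u,v)$ is the usual graph distance, equal to $\infty$ if $u,v$ lie in different components. *)

theory Defs
  imports Main "HOL-Library.Extended_Nat"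
begin

definition simple_graph :: "'a set \<Rightarrow> ('a \<Rightarrow> 'a \<Rightarrow> bool) \<Rightarrow> bool" where
  "simple_graph V E \<longleftrightarrow> finite V \<and> (\<forall>x y. E x y \<longrightarrow> x \<in> V \<and> y \<in> V)
     \<and> (\<forall>x y. E x y \<longrightarrow> E y x) \<and> (\<forall>x. \<not> E x x)"

definition complete_graph :: "'a set \<Rightarrow> ('a \<Rightarrow> 'a \<Rightarrow> bool) \<Rightarrow> bool" where
  "complete_graph V E \<longleftrightarrow> (\<forall>x\<in>V. \<forall>y\<in>V. x \<noteq> y \<longrightarrow> E x y)"

definition two_cliques :: "'a set \<Rightarrow> ('a \<Rightarrow> 'a \<Rightarrow> bool) \<Rightarrow> bool" where
  "two_cliques V E \<longleftrightarrow> (\<exists>A B. A \<noteq> {} \<and> B \<noteq> {} \<and> A \<inter> B = {} \<and> V = A \<union> B \<and>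
     (\<forall>x\<in>V. \<forall>y\<in>V. E x y \<longleftrightarrow> (x \<noteq> y \<and> ((x \<in> A \<and> y \<in> A) \<or> (x \<in> B \<and> y \<in> B)))))"

definition modprod_adj :: "'a set \<Rightarrow> ('a \<Rightarrow> 'a \<Rightarrow> bool) \<Rightarrow> 'b set \<Rightarrow> ('b \<Rightarrow> 'b \<Rightarrow> bool)
    \<Rightarrow> 'a \<times> 'b \<Rightarrow> 'a \<times> 'b \<Rightarrow> bool" where
  "modprod_adj VG EG VH EH p q \<longleftrightarrow> (case p of (g, h) \<Rightarrow> case q of (g', h') \<Rightarrow>
     g \<in> VG \<and> g' \<in> VG \<and> h \<in> VH \<and> h' \<in> VH \<and> (g, h) \<noteq> (g', h') \<and>
     ((g = g' \<and> EH h h') \<or> (EG g g' \<and> h = h') \<or> (EG g g' \<and> EH h h') \<or>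
      (g \<noteq> g' \<and> h \<noteq> h' \<and> \<not> EG g g' \<and> \<not> EH h h')))"

definition modprod_verts :: "'a set \<Rightarrow> 'b set \<Rightarrow> ('a \<times> 'b) set" where
  "modprod_verts VG VH = VG \<times> VH"

definition gdist :: "('a \<Rightarrow> 'a \<Rightarrow> bool) \<Rightarrow> 'a \<Rightarrow> 'a \<Rightarrow> enat" where
  "gdist E u v = (if \<exists>n. (E ^^ n) u v then enat (LEAST n. (E ^^ n) u v) else \<infinity>)"

end

theory Submission
  imports Defs
begin

text \<open>Call two vertices of a graph near if they are equal or adjacent, and far otherwise.
  Two vertices of the modular product are equal or adjacent iff their coordinates are both near
  or both far, so the only pairs not at distance at most one are those with one near and one far
  coordinate, say g, g' near in G and h, h' far in H. If no walk of length three joins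
  (g, h) to (g', h'), testing a handful of explicit short walks shows that g and g' have the same
  closed neighbourhood, that this neighbourhood and its complement are cliques with no edges
  between them, and that likewise H splits into the closed neighbourhood of h and its complement,
  both cliques. For such graphs with parts A and C, whether a vertex (x, y) has x \<in> A exactly
  when y \<in> C is invariant along edges of the product, and (g, h), (g', h') differ in it.\<close>

lemma relpowp_3I: "R a b \<Longrightarrow> R b c \<Longrightarrow> R c d \<Longrightarrow> (R ^^ 3) a d"
  by (auto simp: numeral_3_eq_3)

lemma relpowp_inv_image_iff:
  assumes "bij f"
  shows "((\<lambda>x y. R (f x) (f y)) ^^ n) u v \<longleftrightarrow> (R ^^ n) (f u) (f v)"
proof (induction n arbitrary: v)
  case (Suc n)
  have "(R ^^ Suc n) (f u) (f v) \<longleftrightarrow> (\<exists>z. (R ^^ n) (f u) z \<and> R z (f v))"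
    by auto
  also have "\<dots> \<longleftrightarrow> (\<exists>w. (R ^^ n) (f u) (f w) \<and> R (f w) (f v))"
    using assms by (metis bij_is_surj surjD)
  finally show ?case
    using Suc.IH by auto
qed (simp add: bij_is_inj[OF assms] inj_eq)

lemma gdist_inv_image:
  assumes "bij f"
  shows "gdist (\<lambda>x y. E (f x) (f y)) u v = gdist E (f u) (f v)"
  by (simp add: gdist_def relpowp_inv_image_iff[OF assms])

lemma gdist_le_if_relpowp: "(E ^^ n) u v \<Longrightarrow> gdist E u v \<le> enat n"
  by (auto simp: gdist_def intro: Least_le)

lemma relpowp_reflclp_shorten:
  "(E\<^sup>=\<^sup>= ^^ n) u v \<Longrightarrow> \<exists>m\<le>n. (E ^^ m) u v"
proof (induction n arbitrary: v)
  case (Suc n)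
  from Suc.prems obtain w where "(E\<^sup>=\<^sup>= ^^ n) u w" and wv: "E\<^sup>=\<^sup>= w v"
    by (rule relpowp_Suc_E)
  then obtain m where "m \<le> n" and "(E ^^ m) u w"
    using Suc.IH by blast
  with wv show ?case
    by (auto intro: le_SucI relpowp_Suc_I)
qed simp

lemma gdist_le_if_reflclp_relpowp: "(E\<^sup>=\<^sup>= ^^ n) u v \<Longrightarrow> gdist E u v \<le> enat n"
  by (meson enat_ord_simps(1) gdist_le_if_relpowp order_trans relpowp_reflclp_shorten)

lemma gdist_eq_infinity_if_invariant:
  assumes "\<And>p q. E p q \<Longrightarrow> f p = f q" and "f u \<noteq> f v"
  shows "gdist E u v = \<infinity>"
proof -
  have "(E ^^ n) p q \<Longrightarrow> f p = f q" for n p q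
    by (induction n arbitrary: q) (auto dest: assms(1))
  with assms(2) show ?thesis
    by (auto simp: gdist_def)
qed

definition near :: "'a set \<Rightarrow> ('a \<Rightarrow> 'a \<Rightarrow> bool) \<Rightarrow> 'a \<Rightarrow> 'a \<Rightarrow> bool" where
  "near V E x y \<longleftrightarrow> x \<in> V \<and> y \<in> V \<and> (x = y \<or> E x y)"

definition far :: "'a set \<Rightarrow> ('a \<Rightarrow> 'a \<Rightarrow> bool) \<Rightarrow> 'a \<Rightarrow> 'a \<Rightarrow> bool" where
  "far V E x y \<longleftrightarrow> x \<in> V \<and> y \<in> V \<and> x \<noteq> y \<and> \<not> E x y"

lemma near_refl: "x \<in> V \<Longrightarrow> near V E x x"
  by (simp add: near_def)

lemma near_sym: "simple_graph V E \<Longrightarrow> near V E x y \<Longrightarrow> near V E y x"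
  by (auto simp: near_def simple_graph_def)

lemma far_sym: "simple_graph V E \<Longrightarrow> far V E x y \<Longrightarrow> far V E y x"
  by (auto simp: far_def simple_graph_def)

lemma near_or_far: "x \<in> V \<Longrightarrow> y \<in> V \<Longrightarrow> near V E x y \<or> far V E x y"
  by (auto simp: near_def far_def)

lemma not_near_and_far: "near V E x y \<Longrightarrow> far V E x y \<Longrightarrow> False"
  by (auto simp: near_def far_def)

lemma near_in_vertices: "near V E x y \<Longrightarrow> x \<in> V \<and> y \<in> V"
  by (simp add: near_def)

lemma far_in_vertices: "far V E x y \<Longrightarrow> x \<in> V \<and> y \<in> V"
  by (simp add: far_def)

lemma far_iff_not_near: "x \<in> V \<Longrightarrow> y \<in> V \<Longrightarrow> far V E x y \<longleftrightarrow> \<not> near V E x y"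
  by (auto simp: near_def far_def)

lemma adj_iff_near: "simple_graph V E \<Longrightarrow> x \<noteq> y \<Longrightarrow> E x y \<longleftrightarrow> near V E x y"
  by (auto simp: near_def simple_graph_def)

definition clique_split :: "'a set \<Rightarrow> ('a \<Rightarrow> 'a \<Rightarrow> bool) \<Rightarrow> 'a set \<Rightarrow> bool" where
  "clique_split V E A \<longleftrightarrow> A \<subseteq> V \<and> A \<noteq> {} \<and> V - A \<noteq> {} \<and>
     (\<forall>x\<in>V. \<forall>y\<in>V. E x y \<longleftrightarrow> x \<noteq> y \<and> (x \<in> A \<longleftrightarrow> y \<in> A))"

lemma two_cliques_if_clique_split: "clique_split V E A \<Longrightarrow> two_cliques V E"
  unfolding clique_split_def two_cliques_def by (rule exI[of _ A], rule exI[of _ "V - A"]) auto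

lemma clique_split_of_vertex:
  assumes "simple_graph V E" and "far V E v w"
    and "\<And>x y. x \<in> V \<Longrightarrow> y \<in> V \<Longrightarrow> near V E x y \<longleftrightarrow> (near V E v x \<longleftrightarrow> near V E v y)"
  shows "clique_split V E {x \<in> V. near V E v x}"
  unfolding clique_split_def
proof (intro conjI ballI)
  show "{x \<in> V. near V E v x} \<noteq> {}" and "V - {x \<in> V. near V E v x} \<noteq> {}"
    using assms(2) near_refl[of v V E] not_near_and_far by (fastforce simp: far_def)+
  fix x y assume xy: "x \<in> V" "y \<in> V"
  show "E x y \<longleftrightarrow> x \<noteq> y \<and> (x \<in> {x \<in> V. near V E v x} \<longleftrightarrow> y \<in> {x \<in> V. near V E v x})"
  proof (cases "x = y")
    case False
    then show ?thesis
      using xy assms(3)[OF xy] adj_iff_near[OF assms(1) False] by simp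
  qed (use assms(1) in \<open>simp add: simple_graph_def\<close>)
qed auto

lemma near_iff_same_side:
  "clique_split V E A \<Longrightarrow> x \<in> V \<Longrightarrow> y \<in> V \<Longrightarrow> near V E x y \<longleftrightarrow> (x \<in> A \<longleftrightarrow> y \<in> A)"
  by (auto simp: clique_split_def near_def)

lemma far_iff_opposite_sides:
  "clique_split V E A \<Longrightarrow> x \<in> V \<Longrightarrow> y \<in> V \<Longrightarrow> far V E x y \<longleftrightarrow> (x \<in> A \<longleftrightarrow> y \<notin> A)"
  by (auto simp: clique_split_def far_def)

text \<open>On the vertex set this is exactly the reflexive closure of the modular product adjacency.\<close>
definition modprod_near :: "'a set \<Rightarrow> ('a \<Rightarrow> 'a \<Rightarrow> bool) \<Rightarrow> 'b set \<Rightarrow> ('b \<Rightarrow> 'b \<Rightarrow> bool)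
    \<Rightarrow> 'a \<times> 'b \<Rightarrow> 'a \<times> 'b \<Rightarrow> bool" where
  "modprod_near VG EG VH EH p q \<longleftrightarrow>
     (near VG EG (fst p) (fst q) \<and> near VH EH (snd p) (snd q)) \<or>
     (far VG EG (fst p) (fst q) \<and> far VH EH (snd p) (snd q))"

lemma modprod_near_nearI:
  "near VG EG g g' \<Longrightarrow> near VH EH h h' \<Longrightarrow> modprod_near VG EG VH EH (g, h) (g', h')"
  by (simp add: modprod_near_def)

lemma modprod_near_farI:
  "far VG EG g g' \<Longrightarrow> far VH EH h h' \<Longrightarrow> modprod_near VG EG VH EH (g, h) (g', h')"
  by (simp add: modprod_near_def)

lemma modprod_near_imp_reflclp_adj:
  "modprod_near VG EG VH EH p q \<Longrightarrow> (modprod_adj VG EG VH EH)\<^sup>=\<^sup>= p q"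
  by (cases p; cases q) (auto simp: modprod_near_def near_def far_def modprod_adj_def)

lemma gdist_modprod_le_if_walk:
  "(modprod_near VG EG VH EH ^^ n) u v \<Longrightarrow> gdist (modprod_adj VG EG VH EH) u v \<le> enat n"
  by (metis gdist_le_if_reflclp_relpowp modprod_near_imp_reflclp_adj relpowp_mono)

lemma gdist_modprod_swap:
  "gdist (modprod_adj VG EG VH EH) (g, h) (g', h') = gdist (modprod_adj VH EH VG EG) (h, g) (h', g')"
proof -
  have "modprod_adj VG EG VH EH = (\<lambda>p q. modprod_adj VH EH VG EG (prod.swap p) (prod.swap q))"
    by (intro ext) (auto simp: modprod_adj_def)
  then show ?thesis
    by (simp add: gdist_inv_image bij_swap)
qed

lemma modprod_adj_preserves_parity:
  assumes "clique_split VG EG A" and "clique_split VH EH C"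
    and "modprod_adj VG EG VH EH (g, h) (g', h')"
  shows "(g \<in> A \<longleftrightarrow> h \<in> C) \<longleftrightarrow> (g' \<in> A \<longleftrightarrow> h' \<in> C)"
proof -
  have mem: "g \<in> VG" "g' \<in> VG" "h \<in> VH" "h' \<in> VH"
    using assms(3) by (auto simp: modprod_adj_def)
  have "modprod_near VG EG VH EH (g, h) (g', h')"
    using assms(3) by (auto simp: modprod_adj_def modprod_near_def near_def far_def)
  then show ?thesis
    unfolding modprod_near_def
    using near_iff_same_side[OF assms(1) mem(1,2)] near_iff_same_side[OF assms(2) mem(3,4)]
      far_iff_opposite_sides[OF assms(1) mem(1,2)] far_iff_opposite_sides[OF assms(2) mem(3,4)]
    by auto
qed

lemma gdist_modprod_infinite_if_parity_differs:
  assumes "clique_split VG EG A" and "clique_split VH EH C"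
    and "(g \<in> A \<longleftrightarrow> h \<in> C) \<noteq> (g' \<in> A \<longleftrightarrow> h' \<in> C)"
  shows "gdist (modprod_adj VG EG VH EH) (g, h) (g', h') = \<infinity>"
  using assms by (intro gdist_eq_infinity_if_invariant[where f = "\<lambda>(a, b). a \<in> A \<longleftrightarrow> b \<in> C"])
    (auto dest: modprod_adj_preserves_parity)

locale no_walk3 =
  fixes VG :: "'a set" and EG :: "'a \<Rightarrow> 'a \<Rightarrow> bool"
    and VH :: "'b set" and EH :: "'b \<Rightarrow> 'b \<Rightarrow> bool"
    and g g' :: 'a and h h' :: 'b
  assumes simple_G: "simple_graph VG EG" and simple_H: "simple_graph VH EH"
    and near_gg': "near VG EG g g'" and far_hh': "far VH EH h h'"
    and no_walk: "\<not> (modprod_near VG EG VH EH ^^ 3) (g, h) (g', h')"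
begin

abbreviation "N \<equiv> modprod_near VG EG VH EH"
abbreviation "nearG \<equiv> near VG EG"
abbreviation "farG \<equiv> far VG EG"
abbreviation "nearH \<equiv> near VH EH"
abbreviation "farH \<equiv> far VH EH"

lemma walk_impossible: "N (g, h) w1 \<Longrightarrow> N w1 w2 \<Longrightarrow> N w2 (g', h') \<Longrightarrow> False"
  using no_walk relpowp_3I by metis

lemma vertices: "g \<in> VG" "g' \<in> VG" "h \<in> VH" "h' \<in> VH"
  using near_in_vertices[OF near_gg'] far_in_vertices[OF far_hh'] by auto

lemma near_g'_iff_near_g: "nearG g' x \<longleftrightarrow> nearG g x"
proof (cases "x \<in> VG")
  case True
  have "\<not> (nearG g x \<and> farG g' x)"
  proof
    assume "nearG g x \<and> farG g' x"
    then show False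
      using far_hh' far_sym[OF simple_G] vertices
      by (intro walk_impossible[of "(x, h)" "(g', h')"])
        (auto intro: modprod_near_nearI modprod_near_farI near_refl)
  qed
  moreover have "\<not> (farG g x \<and> nearG g' x)"
  proof
    assume "farG g x \<and> nearG g' x"
    then show False
      using far_hh' near_sym[OF simple_G] vertices
      by (intro walk_impossible[of "(x, h')" "(g', h')"])
        (auto intro: modprod_near_nearI modprod_near_farI near_refl)
  qed
  ultimately show ?thesis
    using True vertices near_or_far not_near_and_far by metis
qed (auto simp: near_def)

lemma far_g'_iff_far_g: "x \<in> VG \<Longrightarrow> farG g' x \<longleftrightarrow> farG g x"
  using near_g'_iff_near_g vertices far_iff_not_near by metis

lemma far_g_imp_far_g': "farG g x \<Longrightarrow> farG x g'"
  using far_g'_iff_far_g far_sym[OF simple_G] far_in_vertices by metis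

lemma no_far_pair_near_g: "nearG g p \<Longrightarrow> farG p p' \<Longrightarrow> nearG g p' \<Longrightarrow> False"
  using vertices near_g'_iff_near_g near_sym[OF simple_G] far_hh'
  by (intro walk_impossible[of "(p, h)" "(p', h')"])
    (auto intro: modprod_near_nearI modprod_near_farI near_refl)

lemma no_far_pair_far_g: "farG g q \<Longrightarrow> farG q q' \<Longrightarrow> farG g q' \<Longrightarrow> False"
  using vertices far_g_imp_far_g' far_sym[OF simple_H] far_hh'
  by (intro walk_impossible[of "(q, h')" "(q', h)"])
    (auto intro: modprod_near_farI dest: far_in_vertices)

lemma no_near_pair_across_g: "nearG g p \<Longrightarrow> farG g q \<Longrightarrow> nearG p q \<Longrightarrow> False"
  using vertices far_g_imp_far_g' far_hh'
  by (intro walk_impossible[of "(p, h)" "(q, h)"])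
    (auto intro: modprod_near_nearI modprod_near_farI near_refl dest: far_in_vertices)

lemma near_iff_same_side_of_g: "x \<in> VG \<Longrightarrow> y \<in> VG \<Longrightarrow> nearG x y \<longleftrightarrow> (nearG g x \<longleftrightarrow> nearG g y)"
  using vertices near_or_far not_near_and_far near_sym[OF simple_G]
    no_far_pair_near_g no_far_pair_far_g no_near_pair_across_g
  by metis

lemma exists_far_from_g:
  assumes "\<not> complete_graph VG EG"
  obtains q where "farG g q"
proof -
  obtain a b where "a \<in> VG" "b \<in> VG" "farG a b"
    using assms by (auto simp: complete_graph_def far_def)
  then show ?thesis
    using that vertices near_or_far no_far_pair_near_g by metis
qed

lemma no_path_near_near_near: "nearH h y \<Longrightarrow> nearH y y' \<Longrightarrow> nearH y' h' \<Longrightarrow> False"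
  using vertices near_gg'
  by (intro walk_impossible[of "(g, y)" "(g, y')"])
    (auto intro: modprod_near_nearI near_refl)

context
  fixes q assumes far_gq: "farG g q"
begin

lemma no_path_far_near_far: "farH h y \<Longrightarrow> nearH y y' \<Longrightarrow> farH y' h' \<Longrightarrow> False"
  using far_gq far_g_imp_far_g'[OF far_gq]
  by (intro walk_impossible[of "(q, y)" "(q, y')"])
    (auto intro: modprod_near_nearI modprod_near_farI near_refl dest: far_in_vertices)

lemma no_path_near_far_far: "nearH h x \<Longrightarrow> farH x y \<Longrightarrow> farH y h' \<Longrightarrow> False"
  using far_gq far_g_imp_far_g'[OF far_gq] vertices
  by (intro walk_impossible[of "(g, x)" "(q, y)"])
    (auto intro: modprod_near_nearI modprod_near_farI near_refl)

lemma no_path_far_far_near: "farH h y \<Longrightarrow> farH y x \<Longrightarrow> nearH x h' \<Longrightarrow> False"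
  using far_gq far_g_imp_far_g'[OF far_gq] vertices
  by (intro walk_impossible[of "(q, y)" "(g', x)"])
    (auto intro: modprod_near_nearI modprod_near_farI near_refl)

lemma near_iff_same_side_of_h: "x \<in> VH \<Longrightarrow> y \<in> VH \<Longrightarrow> nearH x y \<longleftrightarrow> (nearH h x \<longleftrightarrow> nearH h y)"
proof -
  assume xy: "x \<in> VH" "y \<in> VH"
  have near_h'_iff: "nearH z h' \<longleftrightarrow> farH h z" if "z \<in> VH" for z
    using that vertices near_or_far not_near_and_far near_refl
      no_path_near_near_near[of z z] no_path_far_near_far[of z z] by metis
  show ?thesis
    using xy vertices near_or_far not_near_and_far near_sym[OF simple_H] near_h'_iff
      no_path_near_near_near no_path_near_far_far no_path_far_far_near
    by metis
qed

end

lemma clique_splits: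
  assumes "\<not> complete_graph VG EG"
  shows "clique_split VG EG {x \<in> VG. nearG g x}" and "clique_split VH EH {y \<in> VH. nearH h y}"
proof -
  obtain q where q: "farG g q"
    using exists_far_from_g[OF assms] .
  show "clique_split VG EG {x \<in> VG. nearG g x}"
    using clique_split_of_vertex[OF simple_G q] near_iff_same_side_of_g by blast
  show "clique_split VH EH {y \<in> VH. nearH h y}"
    using clique_split_of_vertex[OF simple_H far_hh'] near_iff_same_side_of_h[OF q] by blast
qed

end

lemma gdist_modprod_near_far:
  assumes "simple_graph VG EG" "simple_graph VH EH"
    and "\<not> complete_graph VG EG" and gg': "near VG EG g g'" and hh': "far VH EH h h'"
  shows "gdist (modprod_adj VG EG VH EH) (g, h) (g', h') \<le> 3 \<or>
    (two_cliques VG EG \<and> two_cliques VH EH \<and> gdist (modprod_adj VG EG VH EH) (g, h) (g', h') = \<infinity>)"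
proof (cases "(modprod_near VG EG VH EH ^^ 3) (g, h) (g', h')")
  case True
  then show ?thesis
    using gdist_modprod_le_if_walk[OF True] by (simp add: numeral_eq_enat)
next
  case False
  then interpret no_walk3 VG EG VH EH g g' h h'
    using assms by unfold_locales
  let ?A = "{x \<in> VG. near VG EG g x}" and ?C = "{y \<in> VH. near VH EH h y}"
  have splits: "clique_split VG EG ?A" "clique_split VH EH ?C"
    using clique_splits[OF assms(3)] by auto
  have "(g \<in> ?A \<longleftrightarrow> h \<in> ?C) \<noteq> (g' \<in> ?A \<longleftrightarrow> h' \<in> ?C)"
    using vertices gg' near_refl[of g VG EG] near_refl[of h VH EH] not_near_and_far[of VH EH h h'] hh'
    by auto
  then have "gdist (modprod_adj VG EG VH EH) (g, h) (g', h') = \<infinity>"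
    by (rule gdist_modprod_infinite_if_parity_differs[OF splits])
  then show ?thesis
    using splits[THEN two_cliques_if_clique_split] by blast
qed

lemma gdist_modprod_le_3_or_split:
  assumes "simple_graph VG EG" "simple_graph VH EH"
    and "\<not> complete_graph VG EG" "\<not> complete_graph VH EH"
    and "g \<in> VG" "g' \<in> VG" "h \<in> VH" "h' \<in> VH"
  shows "gdist (modprod_adj VG EG VH EH) (g, h) (g', h') \<le> 3 \<or>
    (two_cliques VG EG \<and> two_cliques VH EH \<and> gdist (modprod_adj VG EG VH EH) (g, h) (g', h') = \<infinity>)"
proof -
  have one_step: "gdist (modprod_adj VG EG VH EH) (g, h) (g', h') \<le> 3"
    if "modprod_near VG EG VH EH (g, h) (g', h')"
  proof -
    have "gdist (modprod_adj VG EG VH EH) (g, h) (g', h') \<le> enat 1"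
      using gdist_modprod_le_if_walk[of 1 VG EG VH EH] that by (simp only: relpowp_1)
    also have "\<dots> \<le> 3"
      by (simp add: numeral_eq_enat)
    finally show ?thesis .
  qed
  consider "near VG EG g g'" "near VH EH h h'" | "near VG EG g g'" "far VH EH h h'"
    | "far VG EG g g'" "near VH EH h h'" | "far VG EG g g'" "far VH EH h h'"
    using near_or_far[OF assms(5,6)] near_or_far[OF assms(7,8)] by blast
  then show ?thesis
  proof cases
    case 1
    then show ?thesis
      using one_step[OF modprod_near_nearI[OF 1]] by blast
  next
    case 2
    then show ?thesis
      using gdist_modprod_near_far[OF assms(1-3)] by blast
  next
    case 3
    then show ?thesis
      using gdist_modprod_near_far[OF assms(2,1,4) 3(2,1)]
      unfolding gdist_modprod_swap[of VG EG VH EH g h g' h'] by blast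
  next
    case 4
    then show ?thesis
      using one_step[OF modprod_near_farI[OF 4]] by blast
  qed
qed

theorem mainTheorem3:
  fixes VG :: "'a set" and EG :: "'a \<Rightarrow> 'a \<Rightarrow> bool"
    and VH :: "'b set" and EH :: "'b \<Rightarrow> 'b \<Rightarrow> bool"
  assumes "simple_graph VG EG" and "simple_graph VH EH"
    and "\<not> complete_graph VG EG" and "\<not> complete_graph VH EH"
  shows "(\<forall>u\<in>modprod_verts VG VH. \<forall>v\<in>modprod_verts VG VH.
            gdist (modprod_adj VG EG VH EH) u v \<le> 3 \<or> gdist (modprod_adj VG EG VH EH) u v = \<infinity>)
       \<and> ((\<exists>u\<in>modprod_verts VG VH. \<exists>v\<in>modprod_verts VG VH.
            gdist (modprod_adj VG EG VH EH) u v = \<infinity>)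
          \<longrightarrow> two_cliques VG EG \<and> two_cliques VH EH)"
proof -
  have dichotomy: "gdist (modprod_adj VG EG VH EH) u v \<le> 3 \<or>
      (two_cliques VG EG \<and> two_cliques VH EH \<and> gdist (modprod_adj VG EG VH EH) u v = \<infinity>)"
    if "u \<in> modprod_verts VG VH" "v \<in> modprod_verts VG VH" for u v
    using that gdist_modprod_le_3_or_split[OF assms] unfolding modprod_verts_def
    by (metis mem_Times_iff prod.collapse)
  show ?thesis
    by (auto dest: dichotomy)
qed

end
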